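(* Let $S\subsetneq\mathbb{S}$ be nonempty, let $j^*=\min(\mathbb{S}\setminus S)$ (the highest-quality product not in $S$), and set $q^{\max}=\bar q_0(S)$, $q^{\min}=\bar q_0(S\cup\{j^*\})$ (so $q^{\min}<q^{\max}$). For $q\in(0,1)$ let $v_i(q)=V(qe^{\theta_i-1})$ and $$R_S(q)=\sum_{i\in S}\frac{v_i(q)}{1-v_i(q)}+\frac{1}{q+\sum_{i\in S}v_i(q)}-1 .$$ Assume $v_i(q)<1/2$ for all $i\in S$ and all $q\in[q^{\min},q^{\max}]$. Then $R_S$ is quasi-convex on $[q^{\min},q^{\max}]$.
   Context: Sellers $\mathbb{S}=\{1,\dots,n\}$ with qualities $\theta_1\ge\dots\ge\theta_n\ge0$. $V:(0,\infty)\to(0,1)$: $V(x)=$ the unique $v\in(0,1)$ with $v\exp(v/(1-v))=x$. For nonempty $T\subseteq\mathbb{S}$, $\bar q_0(T)\in(0,1)$ is the unique solution of $\sum_{i\in T}V(\bar q_0e^{\theta_i-1})=1-\bar q_0$. (For $j\notin S$, $R_S(\bar q_0(S\cup\{j\}))$ is the Bertrand equilibrium revenue of displaying $S\cup\{j\}$, and $R_S(\bar q_0(S))$ that of displaying $S$.) A function $f$ on an interval is quasi-convex if $f(\lambda x+(1-\lambda)y)\le\max\{f(x),f(y)\}$ for all $x,y$ in the interval and $\lambda\in[0,1]$. *)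

theory Defs
  imports "HOL-Analysis.Analysis"
begin

definition V :: "real \<Rightarrow> real" where
  "V x = (THE v. 0 < v \<and> v < 1 \<and> v * exp (v / (1 - v)) = x)"

definition qbar0 :: "(nat \<Rightarrow> real) \<Rightarrow> nat set \<Rightarrow> real" where
  "qbar0 \<theta> T = (THE q. 0 < q \<and> q < 1 \<and>
      (\<Sum>i\<in>T. V (q * exp (\<theta> i - 1))) = 1 - q)"

definition vfun :: "(nat \<Rightarrow> real) \<Rightarrow> nat \<Rightarrow> real \<Rightarrow> real" where
  "vfun \<theta> i q = V (q * exp (\<theta> i - 1))"

definition RS :: "(nat \<Rightarrow> real) \<Rightarrow> nat set \<Rightarrow> real \<Rightarrow> real" where
  "RS \<theta> S q = (\<Sum>i\<in>S. vfun \<theta> i q / (1 - vfun \<theta> i q))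
      + 1 / (q + (\<Sum>i\<in>S. vfun \<theta> i q)) - 1"

definition quasi_convex_on :: "real set \<Rightarrow> (real \<Rightarrow> real) \<Rightarrow> bool" where
  "quasi_convex_on I f \<longleftrightarrow> (\<forall>x\<in>I. \<forall>y\<in>I. \<forall>t::real. 0 \<le> t \<and> t \<le> 1 \<longrightarrow>
      f (t * x + (1 - t) * y) \<le> max (f x) (f y))"

end

theory Submission
  imports Defs
begin

text \<open>Write \<open>v\<^sub>i = vfun \<theta> i q\<close>. Inverting \<open>v exp (v / (1 - v)) = x\<close> gives
  \<open>q v\<^sub>i' = a(v\<^sub>i)\<close> with \<open>a(v) = v (1 - v)\<^sup>2 / (1 - v + v\<^sup>2)\<close>, and then
  \<open>q R\<^sub>S'(q) = \<Sum> v\<^sub>i / (1 - v\<^sub>i + v\<^sub>i\<^sup>2) - (q + \<Sum> a(v\<^sub>i)) / (q + \<Sum> v\<^sub>i)\<^sup>2\<close>.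
  The sum increases with \<open>q\<close>. While every \<open>v\<^sub>i \<le> 1/2\<close> we have \<open>v/3 \<le> a(v) \<le> v\<close>, and a
  pairwise estimate then shows that the last quotient is nonincreasing. So \<open>q R\<^sub>S'(q)\<close> is
  nondecreasing, \<open>R\<^sub>S'\<close> changes sign at most once, from negative to positive, and \<open>R\<^sub>S\<close> has no
  interior strict maximum.\<close>

definition Vinv :: "real \<Rightarrow> real" where
  "Vinv v = v * exp (v / (1 - v))"

lemma Vinv_pos: "0 < v \<Longrightarrow> 0 < Vinv v"
  by (simp add: Vinv_def)

lemma strict_mono_on_Vinv: "strict_mono_on {0<..<1} Vinv"
proof (rule strict_mono_onI)
  fix u w :: real assume "u \<in> {0<..<1}" "w \<in> {0<..<1}" "u < w"
  then have "u / (1 - u) < w / (1 - w)" by (simp add: field_simps)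
  then have "exp (u / (1 - u)) < exp (w / (1 - w))" by simp
  with \<open>u \<in> {0<..<1}\<close> \<open>u < w\<close> show "Vinv u < Vinv w"
    unfolding Vinv_def by (intro mult_strict_mono) auto
qed

lemma isCont_Vinv: "v \<noteq> 1 \<Longrightarrow> isCont Vinv v"
  unfolding Vinv_def by (intro continuous_intros) auto

lemma Vinv_has_real_derivative:
  "v \<noteq> 1 \<Longrightarrow> (Vinv has_real_derivative exp (v / (1 - v)) * (1 + v / (1 - v)^2)) (at v)"
  unfolding Vinv_def
  by (auto intro!: derivative_eq_intros simp: field_simps power2_eq_square)

lemma Vinv_surj:
  assumes "0 < x"
  shows "\<exists>v. 0 < v \<and> v < 1 \<and> Vinv v = x"
proof -
  define a where "a = min (1/2) (x / (2 * exp 1))"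
  define b where "b = (x + 1) / (x + 2)"
  have a: "0 < a" "a \<le> 1/2" using assms by (auto simp: a_def)
  have b: "1/2 \<le> b" "b < 1" using assms by (auto simp: b_def field_simps)
  have "a / (1 - a) \<le> 1" using a by (simp add: field_simps)
  then have "Vinv a \<le> a * exp 1" unfolding Vinv_def using a by (simp add: mult_left_mono)
  also have "\<dots> \<le> x / (2 * exp 1) * exp 1" unfolding a_def by (intro mult_right_mono) auto
  finally have lower: "Vinv a \<le> x" using assms by simp
  have "b / (1 - b) = x + 1" using assms by (simp add: b_def field_simps)
  then have "Vinv b = b * exp (x + 1)" by (simp add: Vinv_def)
  also have "\<dots> \<ge> b * (x + 2)" using b exp_ge_add_one_self[of "x + 1"]
    by (intro mult_left_mono) auto
  finally have upper: "x \<le> Vinv b" using assms by (simp add: b_def)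
  have "continuous_on {a..b} Vinv"
    using a b by (intro continuous_at_imp_continuous_on ballI isCont_Vinv) auto
  then obtain v where "a \<le> v" "v \<le> b" "Vinv v = x"
    using IVT'[of Vinv a x b] lower upper a b by auto
  with a b show ?thesis by (intro exI[of _ v]) auto
qed

lemma V_spec:
  assumes "0 < x"
  shows "0 < V x \<and> V x < 1 \<and> Vinv (V x) = x"
proof -
  obtain v where v: "0 < v" "v < 1" "Vinv v = x" using Vinv_surj[OF assms] by blast
  have "\<exists>!v. 0 < v \<and> v < 1 \<and> Vinv v = x"
    using v strict_mono_on_imp_inj_on[OF strict_mono_on_Vinv]
    by (intro ex1I[of _ v]) (auto simp: inj_on_def)
  from theI'[OF this] show ?thesis unfolding V_def Vinv_def .
qed

lemma V_Vinv: "0 < v \<Longrightarrow> v < 1 \<Longrightarrow> V (Vinv v) = v"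
  using V_spec[OF Vinv_pos, of v] strict_mono_on_imp_inj_on[OF strict_mono_on_Vinv]
  by (auto simp: inj_on_def)

lemma V_le: "0 < x \<Longrightarrow> V x \<le> x"
  using V_spec[of x] mult_left_mono[of 1 "exp (V x / (1 - V x))" "V x"]
  by (simp add: Vinv_def)

lemma strict_mono_on_V: "strict_mono_on {0<..} V"
proof (rule strict_mono_onI)
  fix x y :: real assume "x \<in> {0<..}" "y \<in> {0<..}" "x < y"
  then show "V x < V y"
    using V_spec[of x] V_spec[of y] strict_mono_on_leD[OF strict_mono_on_Vinv, of "V y" "V x"]
    by (force simp: not_less[symmetric])
qed

lemma isCont_V:
  assumes "0 < x"
  shows "isCont V x"
proof -
  have v: "0 < V x" "V x < 1" "Vinv (V x) = x" using V_spec[OF assms] by auto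
  define d where "d = min (V x / 2) ((1 - V x) / 2)"
  have d: "0 < d" using v by (simp add: d_def)
  have unit: "0 < z \<and> z < 1" if "\<bar>z - V x\<bar> \<le> d" for z
  proof -
    have "d \<le> V x / 2" "d \<le> (1 - V x) / 2" by (simp_all add: d_def min_def)
    moreover have "z - V x \<le> d" "V x - z \<le> d" using that by auto
    ultimately show ?thesis using v by auto
  qed
  have "isCont V (Vinv (V x))"
    by (rule isCont_inverse_function[OF d]) (auto dest!: unit intro: V_Vinv isCont_Vinv)
  with v show ?thesis by simp
qed

text \<open>\<open>dV_scaled (V x)\<close> is \<open>x * V'(x)\<close>, a rational function of \<open>V x\<close>.\<close>

definition dV_scaled :: "real \<Rightarrow> real" where
  "dV_scaled v = v * (1 - v)^2 / (1 - v + v^2)"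

lemma one_minus_plus_sq_pos: "0 < 1 - v + (v::real)^2"
proof -
  have "1 - v + v^2 = (v - 1/2)^2 + 3/4" by (simp add: power2_eq_square algebra_simps)
  moreover have "0 \<le> (v - 1/2)^2" by simp
  ultimately show ?thesis by linarith
qed

lemma V_has_real_derivative:
  assumes "0 < x"
  shows "(V has_real_derivative dV_scaled (V x) / x) (at x)"
proof -
  define v where "v = V x"
  define E where "E = exp (v / (1 - v))"
  have v: "0 < v" "v < 1" "Vinv v = x" using V_spec[OF assms] by (auto simp: v_def)
  have x: "x = v * E" using v by (simp add: Vinv_def E_def)
  have "(V has_real_derivative inverse (E * (1 + v / (1 - v)^2))) (at x)"
  proof (rule DERIV_inverse_function[where f = Vinv and a = 0 and b = "x + 1"])
    show "(Vinv has_real_derivative E * (1 + v / (1 - v)^2)) (at (V x))"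
      using Vinv_has_real_derivative[of v] v by (simp add: v_def E_def)
    show "E * (1 + v / (1 - v)^2) \<noteq> 0"
      using v by (simp add: E_def add_pos_pos order.strict_implies_not_eq[symmetric])
    show "Vinv (V y) = y" if "0 < y" "y < x + 1" for y using V_spec[of y] that by simp
  qed (use assms isCont_V in auto)
  moreover have "inverse (E * (1 + v / (1 - v)^2)) = dV_scaled v / x"
  proof -
    have "(1 - v)^2 \<noteq> 0" "0 < E" using v by (simp_all add: E_def)
    then have "1 + v / (1 - v)^2 = ((1 - v)^2 + v) / (1 - v)^2"
      by (metis add_divide_distrib divide_self)
    also have "(1 - v)^2 + v = 1 - v + v^2" by (simp add: power2_eq_square algebra_simps)
    finally have "inverse (E * (1 + v / (1 - v)^2)) = (1 - v)^2 / (E * (1 - v + v^2))"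
      by simp
    also have "\<dots> = v * (1 - v)^2 / (1 - v + v^2) / (v * E)"
      using v by simp
    finally show ?thesis unfolding x dV_scaled_def .
  qed
  ultimately show ?thesis by (simp add: v_def)
qed


definition dV_scaled' :: "real \<Rightarrow> real" where
  "dV_scaled' v = (1 - v)^2 / (1 - v + v^2) - v * (1 - v) * (1 + v) / (1 - v + v^2)^2"

lemma dV_scaled_has_real_derivative: "(dV_scaled has_real_derivative dV_scaled' v) (at v)"
proof -
  define p where "p = 1 - v + v^2"
  have p: "p \<noteq> 0" using one_minus_plus_sq_pos[of v] by (simp add: p_def)
  have "(dV_scaled has_real_derivative
      (((1 - v)^2 - 2 * v * (1 - v)) * p - v * (1 - v)^2 * (2 * v - 1)) / (p * p)) (at v)"
    using one_minus_plus_sq_pos[of v] unfolding dV_scaled_def[abs_def] p_def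
    by (auto intro!: derivative_eq_intros simp: algebra_simps)
  moreover have "((1 - v)^2 - 2 * v * (1 - v)) * p - v * (1 - v)^2 * (2 * v - 1)
      = (1 - v)^2 * p - v * (1 - v) * (1 + v)"
    unfolding p_def by (simp add: algebra_simps power2_eq_square)
  then have "(((1 - v)^2 - 2 * v * (1 - v)) * p - v * (1 - v)^2 * (2 * v - 1)) / (p * p)
      = dV_scaled' v"
    using p unfolding dV_scaled'_def p_def[symmetric] by (simp add: diff_divide_distrib power2_eq_square)
  ultimately show ?thesis by simp
qed

lemma dV_scaled_bounds:
  fixes v :: real
  assumes "0 < v" "v \<le> 1/2"
  shows "0 < dV_scaled v \<and> dV_scaled v \<le> v \<and> v \<le> 3 * dV_scaled v"
proof -
  have p: "0 < 1 - v + v^2" by (rule one_minus_plus_sq_pos)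
  have "(1 - v)^2 \<le> 1 - v + v^2" using assms by (simp add: power2_eq_square algebra_simps)
  then have "v * (1 - v)^2 \<le> v * (1 - v + v^2)" using assms by (intro mult_left_mono) auto
  then have upper: "dV_scaled v \<le> v" unfolding dV_scaled_def using p by (simp add: divide_le_eq)
  have "0 \<le> (2 - v) * (1 - 2 * v)" using assms by simp
  then have "1 - v + v^2 \<le> 3 * (1 - v)^2" by (simp add: power2_eq_square algebra_simps)
  then have "v * (1 - v + v^2) \<le> v * (3 * (1 - v)^2)" using assms by (intro mult_left_mono) auto
  then have lower: "v \<le> 3 * dV_scaled v"
    unfolding dV_scaled_def using p by (simp add: le_divide_eq algebra_simps)
  have "0 < dV_scaled v" unfolding dV_scaled_def using assms p by simp
  with upper lower show ?thesis by blast
qed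

lemma dV_scaled'_mult_le:
  fixes v :: real
  assumes "0 < v" "v < 1"
  shows "dV_scaled' v * dV_scaled v \<le> (dV_scaled v)^2 / v"
proof -
  have p: "0 < 1 - v + v^2" by (rule one_minus_plus_sq_pos)
  have "0 \<le> dV_scaled v" unfolding dV_scaled_def using assms p by simp
  moreover have "dV_scaled' v \<le> dV_scaled v / v"
    using assms unfolding dV_scaled'_def dV_scaled_def by simp
  ultimately have "dV_scaled' v * dV_scaled v \<le> dV_scaled v / v * dV_scaled v"
    by (intro mult_right_mono)
  then show ?thesis by (simp add: power2_eq_square)
qed

definition odds_slope :: "real \<Rightarrow> real" where
  "odds_slope v = v / (1 - v + v^2)"

lemma odds_slope_mono:
  fixes a b :: real
  assumes "0 < a" "a \<le> b" "b < 1"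
  shows "odds_slope a \<le> odds_slope b"
proof -
  have "a * (1 - b + b^2) - b * (1 - a + a^2) = (a - b) * (1 - a * b)"
    by (simp add: algebra_simps power2_eq_square)
  moreover have "(a - b) * (1 - a * b) \<le> 0"
    using assms mult_mono[of a 1 b 1] by (intro mult_nonpos_nonneg) auto
  ultimately have "a * (1 - b + b^2) \<le> b * (1 - a + a^2)" by linarith
  then show ?thesis
    using one_minus_plus_sq_pos[of a] one_minus_plus_sq_pos[of b]
    unfolding odds_slope_def by (simp add: divide_simps)
qed

lemma cross_ratio_sum_le:
  fixes a b v w :: real
  assumes "0 < a" "a \<le> v" "v \<le> 3 * a" "0 < b" "b \<le> w" "w \<le> 3 * b"
  shows "a^2 / v * w + b^2 / w * v \<le> 4 * a * b"
proof -
  have pos: "0 < v" "0 < w" using assms by auto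
  define x y where "x = a * w" and "y = b * v"
  have "x \<le> 3 * y" "y \<le> 3 * x"
    using assms mult_mono[of a v w "3 * b"] mult_mono[of b w v "3 * a"]
    by (auto simp: x_def y_def algebra_simps)
  then have "0 \<le> (3 * y - x) * (3 * x - y)" by simp
  then have "3 * x^2 + 3 * y^2 \<le> 10 * x * y" by (simp add: algebra_simps power2_eq_square)
  moreover have "0 \<le> x * y" using assms pos by (simp add: x_def y_def)
  ultimately have "x^2 + y^2 \<le> 4 * x * y" by linarith
  then have "(a * w)^2 + (b * v)^2 \<le> 4 * a * b * (v * w)" by (simp add: x_def y_def algebra_simps)
  moreover have "a^2 / v * w + b^2 / w * v = ((a * w)^2 + (b * v)^2) / (v * w)"
    using pos by (simp add: field_simps power2_eq_square)
  ultimately show ?thesis using pos by (simp add: divide_le_eq)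
qed

lemma sum_power2_divide_mult_sum_le:
  fixes a v :: "'a \<Rightarrow> real"
  assumes bounds: "\<And>i. i \<in> S \<Longrightarrow> 0 < a i \<and> a i \<le> v i \<and> v i \<le> 3 * a i" and "0 \<le> q"
  shows "(q + (\<Sum>i\<in>S. (a i)^2 / v i)) * (q + (\<Sum>i\<in>S. v i)) \<le> 2 * (q + (\<Sum>i\<in>S. a i))^2"
proof -
  define K where "K = (\<Sum>i\<in>S. (a i)^2 / v i)"
  define s where "s = (\<Sum>i\<in>S. v i)"
  define A where "A = (\<Sum>i\<in>S. a i)"
  have "(a i)^2 / v i + v i \<le> 4 * a i" if "i \<in> S" for i
  proof -
    have "(a i)^2 / v i \<le> a i"
      using bounds[OF that] by (simp add: divide_le_eq power2_eq_square mult_left_mono)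
    with bounds[OF that] show ?thesis by linarith
  qed
  then have sum: "K + s \<le> 4 * A"
    unfolding K_def s_def A_def by (simp add: sum_mono sum.distrib[symmetric] sum_distrib_left)
  have "K * s = (\<Sum>i\<in>S. \<Sum>j\<in>S. (a i)^2 / v i * v j)"
    unfolding K_def s_def by (rule sum_product)
  moreover have "\<dots> = (\<Sum>i\<in>S. \<Sum>j\<in>S. (a j)^2 / v j * v i)"
    by (rule sum.swap)
  ultimately have "2 * (K * s) = (\<Sum>i\<in>S. \<Sum>j\<in>S. (a i)^2 / v i * v j + (a j)^2 / v j * v i)"
    by (simp add: sum.distrib)
  also have "\<dots> \<le> (\<Sum>i\<in>S. \<Sum>j\<in>S. 4 * a i * a j)"
    using bounds by (intro sum_mono cross_ratio_sum_le) auto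
  also have "\<dots> = 4 * A^2"
    unfolding A_def power2_eq_square sum_product by (simp add: sum_distrib_left mult.assoc)
  finally have prod: "K * s \<le> 2 * A^2" by simp
  have "(q + K) * (q + s) = q^2 + q * (K + s) + K * s" by (simp add: algebra_simps power2_eq_square)
  also have "\<dots> \<le> q^2 + q * (4 * A) + 2 * A^2"
    using sum prod \<open>0 \<le> q\<close> by (intro add_mono mult_left_mono) auto
  also have "\<dots> \<le> 2 * (q + A)^2" using \<open>0 \<le> q\<close> by (simp add: power2_eq_square algebra_simps)
  finally show ?thesis unfolding K_def s_def A_def .
qed

lemma qbar0_spec:
  assumes "finite T" "T \<noteq> {}"
  shows "0 < qbar0 \<theta> T \<and> qbar0 \<theta> T < 1 \<and> (\<Sum>i\<in>T. V (qbar0 \<theta> T * exp (\<theta> i - 1))) = 1 - qbar0 \<theta> T"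
proof -
  define c where "c i = exp (\<theta> i - 1)" for i
  have c: "0 < c i" for i by (simp add: c_def)
  define f where "f q = (\<Sum>i\<in>T. V (q * c i)) + q" for q
  have f_strict_mono: "f x < f y" if "0 < x" "x < y" for x y
  proof -
    have "(\<Sum>i\<in>T. V (x * c i)) \<le> (\<Sum>i\<in>T. V (y * c i))"
      using that c by (intro sum_mono less_imp_le strict_mono_onD[OF strict_mono_on_V]) auto
    with that show ?thesis by (simp add: f_def)
  qed
  define q0 where "q0 = 1 / ((\<Sum>i\<in>T. c i) + 2)"
  have sum_c: "0 \<le> (\<Sum>i\<in>T. c i)" using c by (simp add: sum_nonneg less_imp_le)
  have q0: "0 < q0" "q0 < 1" using sum_c by (auto simp: q0_def field_simps)
  have "(\<Sum>i\<in>T. V (q0 * c i)) \<le> (\<Sum>i\<in>T. q0 * c i)"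
    using q0 c by (intro sum_mono V_le) simp
  then have "f q0 \<le> q0 * ((\<Sum>i\<in>T. c i) + 1)" by (simp add: f_def sum_distrib_left algebra_simps)
  also have "\<dots> < 1" using sum_c by (simp add: q0_def field_simps)
  finally have f_q0: "f q0 \<le> 1" by simp
  have "0 < (\<Sum>i\<in>T. V (1 * c i))" using assms c V_spec by (intro sum_pos) auto
  then have f_1: "1 < f 1" by (simp add: f_def)
  have "continuous_on {q0..1} f" unfolding f_def using q0 c
    by (intro continuous_at_imp_continuous_on ballI continuous_intros
        continuous_at_compose[of _ "\<lambda>q. q * c _" V, unfolded o_def] isCont_V) auto
  then obtain q where q: "q0 \<le> q" "q \<le> 1" "f q = 1" using IVT'[of f q0 1 1] f_q0 f_1 q0 by auto
  have "q < 1" using q f_1 by (cases "q = 1") auto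
  have "\<exists>!q. 0 < q \<and> q < 1 \<and> (\<Sum>i\<in>T. V (q * exp (\<theta> i - 1))) = 1 - q"
  proof (rule ex1I[of _ q])
    show "0 < q \<and> q < 1 \<and> (\<Sum>i\<in>T. V (q * exp (\<theta> i - 1))) = 1 - q"
      using q q0 \<open>q < 1\<close> by (simp add: f_def c_def)
    fix r assume r: "0 < r \<and> r < 1 \<and> (\<Sum>i\<in>T. V (r * exp (\<theta> i - 1))) = 1 - r"
    then have "f r = f q" using q by (simp add: f_def c_def)
    then show "r = q"
      using f_strict_mono[of r q] f_strict_mono[of q r] r q q0 by (cases r q rule: linorder_cases) auto
  qed
  from theI'[OF this] show ?thesis unfolding qbar0_def .
qed

lemma vfun_bounds: "0 < q \<Longrightarrow> 0 < vfun \<theta> i q \<and> vfun \<theta> i q < 1"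
  unfolding vfun_def using V_spec[of "q * exp (\<theta> i - 1)"] by simp

lemma vfun_strict_mono: "0 < x \<Longrightarrow> x < y \<Longrightarrow> vfun \<theta> i x < vfun \<theta> i y"
  unfolding vfun_def by (intro strict_mono_onD[OF strict_mono_on_V]) auto

lemma vfun_has_real_derivative:
  assumes "0 < q"
  shows "(vfun \<theta> i has_real_derivative dV_scaled (vfun \<theta> i q) / q) (at q)"
proof -
  define c where "c = exp (\<theta> i - 1)"
  have c: "0 < c" by (simp add: c_def)
  have "((\<lambda>q. V (q * c)) has_real_derivative (dV_scaled (V (q * c)) / (q * c)) * c) (at q)"
    by (rule DERIV_chain2[OF V_has_real_derivative]) (use assms c in \<open>auto intro!: derivative_eq_intros\<close>)
  with c show ?thesis by (simp add: vfun_def[abs_def] c_def)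
qed

definition share_slope :: "(nat \<Rightarrow> real) \<Rightarrow> nat set \<Rightarrow> real \<Rightarrow> real" where
  "share_slope \<theta> S q =
     (q + (\<Sum>i\<in>S. dV_scaled (vfun \<theta> i q))) / (q + (\<Sum>i\<in>S. vfun \<theta> i q))^2"

definition RS_slope :: "(nat \<Rightarrow> real) \<Rightarrow> nat set \<Rightarrow> real \<Rightarrow> real" where
  "RS_slope \<theta> S q = (\<Sum>i\<in>S. odds_slope (vfun \<theta> i q)) - share_slope \<theta> S q"

lemma plus_sum_vfun_has_real_derivative:
  assumes "0 < q"
  shows "((\<lambda>q. q + (\<Sum>i\<in>S. vfun \<theta> i q)) has_real_derivative
           (q + (\<Sum>i\<in>S. dV_scaled (vfun \<theta> i q))) / q) (at q)"
proof -
  have "((\<lambda>q. q + (\<Sum>i\<in>S. vfun \<theta> i q)) has_real_derivative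
           1 + (\<Sum>i\<in>S. dV_scaled (vfun \<theta> i q) / q)) (at q)"
    using assms by (intro DERIV_add DERIV_ident DERIV_sum vfun_has_real_derivative)
  with assms show ?thesis by (simp add: sum_divide_distrib add_divide_distrib)
qed

lemma share_slope_has_real_derivative:
  fixes \<theta> :: "nat \<Rightarrow> real" and S :: "nat set" and q :: real
  assumes "0 < q"
  defines "M \<equiv> q + (\<Sum>i\<in>S. vfun \<theta> i q)" and "N \<equiv> q + (\<Sum>i\<in>S. dV_scaled (vfun \<theta> i q))"
    and "C \<equiv> \<Sum>i\<in>S. dV_scaled' (vfun \<theta> i q) * dV_scaled (vfun \<theta> i q)"
  shows "(share_slope \<theta> S has_real_derivative ((q + C) * M - 2 * N^2) / (q * M^3)) (at q)"
proof -
  have "0 \<le> (\<Sum>i\<in>S. vfun \<theta> i q)" using vfun_bounds[OF assms(1)] by (simp add: sum_nonneg less_imp_le)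
  then have "0 < M" using assms(1) by (simp add: M_def)
  have dN: "((\<lambda>q. q + (\<Sum>i\<in>S. dV_scaled (vfun \<theta> i q))) has_real_derivative (q + C) / q) (at q)"
  proof -
    have "((\<lambda>q. q + (\<Sum>i\<in>S. dV_scaled (vfun \<theta> i q))) has_real_derivative
            1 + (\<Sum>i\<in>S. dV_scaled' (vfun \<theta> i q) * (dV_scaled (vfun \<theta> i q) / q))) (at q)"
      using assms(1) by (intro DERIV_add DERIV_ident DERIV_sum
          DERIV_chain2[OF dV_scaled_has_real_derivative vfun_has_real_derivative])
    with assms(1) show ?thesis by (simp add: C_def sum_divide_distrib add_divide_distrib)
  qed
  have "(share_slope \<theta> S has_real_derivative
      ((q + C) / q * M^2 - N * (2 * (N / q * M))) / (M^2 * M^2)) (at q)"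
    unfolding share_slope_def[abs_def] M_def N_def
    using DERIV_divide[OF dN DERIV_power[where n = 2, OF plus_sum_vfun_has_real_derivative[OF assms(1)]]]
      \<open>0 < M\<close> by (simp add: M_def N_def power2_eq_square)
  moreover have "((q + C) / q * M^2 - N * (2 * (N / q * M))) / (M^2 * M^2)
      = ((q + C) * M - 2 * N^2) / (q * M^3)"
    using assms(1) \<open>0 < M\<close> by (simp add: field_simps power2_eq_square power3_eq_cube)
  ultimately show ?thesis by simp
qed

text \<open>The hypothesis \<open>v\<^sub>i < 1/2\<close> enters only here, via \<open>v \<le> 3 * dV_scaled v\<close>.\<close>

lemma share_slope_antimono:
  assumes "0 < x" "x \<le> y"
    and half: "\<And>i q. i \<in> S \<Longrightarrow> x \<le> q \<Longrightarrow> q \<le> y \<Longrightarrow> vfun \<theta> i q < 1/2"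
  shows "share_slope \<theta> S y \<le> share_slope \<theta> S x"
proof (rule DERIV_nonpos_imp_nonincreasing[OF \<open>x \<le> y\<close>])
  fix q assume "x \<le> q" "q \<le> y"
  then have "0 < q" using assms(1) by simp
  define v where "v i = vfun \<theta> i q" for i
  define M where "M = q + (\<Sum>i\<in>S. v i)"
  define N where "N = q + (\<Sum>i\<in>S. dV_scaled (v i))"
  define C where "C = (\<Sum>i\<in>S. dV_scaled' (v i) * dV_scaled (v i))"
  define K where "K = (\<Sum>i\<in>S. (dV_scaled (v i))^2 / v i)"
  have v: "0 < v i" "v i < 1" for i using vfun_bounds[OF \<open>0 < q\<close>] by (simp_all add: v_def)
  have "0 < M" unfolding M_def using v \<open>0 < q\<close> by (simp add: sum_nonneg less_imp_le add_pos_nonneg)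
  have "C \<le> K" unfolding C_def K_def using v by (intro sum_mono dV_scaled'_mult_le)
  then have "(q + C) * M \<le> (q + K) * M" using \<open>0 < M\<close> by simp
  also have "\<dots> \<le> 2 * N^2"
    unfolding K_def M_def N_def using \<open>0 < q\<close> v half \<open>x \<le> q\<close> \<open>q \<le> y\<close>
    by (intro sum_power2_divide_mult_sum_le dV_scaled_bounds) (auto simp: v_def less_imp_le)
  finally have "((q + C) * M - 2 * N^2) / (q * M^3) \<le> 0"
    using \<open>0 < q\<close> \<open>0 < M\<close> by (intro divide_nonpos_pos) auto
  then show "\<exists>d. (share_slope \<theta> S has_real_derivative d) (at q) \<and> d \<le> 0"
    using share_slope_has_real_derivative[OF \<open>0 < q\<close>, of \<theta> S] unfolding v_def M_def N_def C_def
    by blast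
qed

lemma vfun_odds_has_real_derivative:
  assumes "0 < q"
  shows "((\<lambda>q. vfun \<theta> i q / (1 - vfun \<theta> i q)) has_real_derivative
           odds_slope (vfun \<theta> i q) / q) (at q)"
proof -
  define v where "v = vfun \<theta> i q"
  have v: "0 < v" "v < 1" using vfun_bounds[OF assms] by (simp_all add: v_def)
  have "((\<lambda>q. vfun \<theta> i q / (1 - vfun \<theta> i q)) has_real_derivative
      (dV_scaled v / q * (1 - v) + v * (dV_scaled v / q)) / (1 - v)^2) (at q)"
    using assms v unfolding v_def
    by (auto intro!: derivative_eq_intros vfun_has_real_derivative simp: power2_eq_square)
  moreover have "(dV_scaled v / q * (1 - v) + v * (dV_scaled v / q)) / (1 - v)^2 = odds_slope v / q"
  proof -
    have "dV_scaled v / q * (1 - v) + v * (dV_scaled v / q) = dV_scaled v / q"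
      using assms by (simp add: field_simps)
    moreover have "dV_scaled v / (1 - v)^2 = odds_slope v"
      using v unfolding dV_scaled_def odds_slope_def by simp
    ultimately show ?thesis by (metis divide_divide_eq_left mult.commute)
  qed
  ultimately show ?thesis by (simp add: v_def)
qed

lemma RS_has_real_derivative:
  assumes "0 < q"
  shows "(RS \<theta> S has_real_derivative RS_slope \<theta> S q / q) (at q)"
proof -
  define M where "M = q + (\<Sum>i\<in>S. vfun \<theta> i q)"
  define N where "N = q + (\<Sum>i\<in>S. dV_scaled (vfun \<theta> i q))"
  have "0 < M" unfolding M_def using vfun_bounds assms by (simp add: sum_nonneg less_imp_le add_pos_nonneg)
  have "((\<lambda>q. 1 / (q + (\<Sum>i\<in>S. vfun \<theta> i q))) has_real_derivative (0 * M - 1 * (N / q)) / (M * M)) (at q)"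
    unfolding M_def N_def using \<open>0 < M\<close>
    by (intro DERIV_divide DERIV_const plus_sum_vfun_has_real_derivative assms) (simp add: M_def)
  moreover have "(0 * M - 1 * (N / q)) / (M * M) = - share_slope \<theta> S q / q"
    using assms \<open>0 < M\<close> unfolding share_slope_def M_def[symmetric] N_def[symmetric]
    by (simp add: power2_eq_square)
  ultimately have "((\<lambda>q. 1 / (q + (\<Sum>i\<in>S. vfun \<theta> i q))) has_real_derivative - share_slope \<theta> S q / q) (at q)"
    by simp
  then have "((\<lambda>q. (\<Sum>i\<in>S. vfun \<theta> i q / (1 - vfun \<theta> i q)) + 1 / (q + (\<Sum>i\<in>S. vfun \<theta> i q)) - 1)
      has_real_derivative (\<Sum>i\<in>S. odds_slope (vfun \<theta> i q) / q) + - share_slope \<theta> S q / q - 0) (at q)"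
    using assms by (intro DERIV_diff DERIV_add DERIV_sum vfun_odds_has_real_derivative DERIV_const)
  then show ?thesis
    unfolding RS_def[abs_def] RS_slope_def by (simp add: sum_divide_distrib diff_divide_distrib)
qed

lemma RS_slope_mono:
  assumes "0 < x" "x \<le> y"
    and half: "\<And>i q. i \<in> S \<Longrightarrow> x \<le> q \<Longrightarrow> q \<le> y \<Longrightarrow> vfun \<theta> i q < 1/2"
  shows "RS_slope \<theta> S x \<le> RS_slope \<theta> S y"
proof -
  have "vfun \<theta> i x \<le> vfun \<theta> i y" for i
    using vfun_strict_mono[of x y \<theta> i] assms(1,2) by (cases "x = y") auto
  then have "(\<Sum>i\<in>S. odds_slope (vfun \<theta> i x)) \<le> (\<Sum>i\<in>S. odds_slope (vfun \<theta> i y))"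
    using vfun_bounds assms(1,2) by (intro sum_mono odds_slope_mono) auto
  moreover have "share_slope \<theta> S y \<le> share_slope \<theta> S x"
    using share_slope_antimono[where S = S and \<theta> = \<theta>] assms by blast
  ultimately show ?thesis unfolding RS_slope_def by linarith
qed

text \<open>At an interior strict maximum, mean-value points on its two sides would violate \<open>sign\<close>.\<close>

lemma quasi_convex_on_if_deriv_sign_change:
  fixes f f' :: "real \<Rightarrow> real"
  assumes deriv: "\<And>t. a \<le> t \<Longrightarrow> t \<le> b \<Longrightarrow> (f has_real_derivative f' t) (at t)"
    and sign: "\<And>s t. a \<le> s \<Longrightarrow> s < t \<Longrightarrow> t \<le> b \<Longrightarrow> 0 < f' s \<Longrightarrow> 0 \<le> f' t"
  shows "quasi_convex_on {a..b} f"
proof -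
  have between: "f z \<le> max (f x) (f y)"
    if order: "a \<le> x" "x \<le> z" "z \<le> y" "y \<le> b" for x y z
  proof (rule ccontr)
    assume "\<not> ?thesis"
    then have "f x < f z" "f y < f z" by auto
    with order have "x < z" "z < y" by (auto simp: order.order_iff_strict)
    obtain s where s: "x < s" "s < z" "f z - f x = (z - x) * f' s"
      using MVT2[OF \<open>x < z\<close>, of f f'] deriv order by force
    obtain t where t: "z < t" "t < y" "f y - f z = (y - z) * f' t"
      using MVT2[OF \<open>z < y\<close>, of f f'] deriv order by force
    have "0 < f' s" using s \<open>f x < f z\<close> zero_less_mult_pos[of "z - x" "f' s"] by simp
    moreover have "f' t < 0" using t \<open>f y < f z\<close> mult_nonneg_nonneg[of "y - z" "f' t"] by linarith
    ultimately show False using sign[of s t] s t order by auto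
  qed
  show ?thesis unfolding quasi_convex_on_def
  proof (intro ballI allI impI)
    fix x y t :: real assume "x \<in> {a..b}" "y \<in> {a..b}" "0 \<le> t \<and> t \<le> 1"
    moreover have "max (f (min x y)) (f (max x y)) = max (f x) (f y)" by (cases "x \<le> y") auto
    moreover have "min x y \<le> t * x + (1 - t) * y" "t * x + (1 - t) * y \<le> max x y"
      using \<open>0 \<le> t \<and> t \<le> 1\<close>
      by (smt (verit, del_insts) add.commute convex_bound_le segment_bound_lemma)+
    ultimately show "f (t * x + (1 - t) * y) \<le> max (f x) (f y)"
      using between[of "min x y" "t * x + (1 - t) * y" "max x y"] by auto
  qed
qed

theorem lemma5:
  fixes n :: nat and \<theta> :: "nat \<Rightarrow> real" and S :: "nat set"
  assumes mono: "\<And>i j. 1 \<le> i \<Longrightarrow> i \<le> j \<Longrightarrow> j \<le> n \<Longrightarrow> \<theta> j \<le> \<theta> i"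
    and nonneg: "\<And>i. 1 \<le> i \<Longrightarrow> i \<le> n \<Longrightarrow> 0 \<le> \<theta> i"
    and S_sub: "S \<subset> {1..n}" and S_ne: "S \<noteq> {}"
    and half: "\<And>i q. i \<in> S \<Longrightarrow>
        qbar0 \<theta> (insert (Min ({1..n} - S)) S) \<le> q \<Longrightarrow> q \<le> qbar0 \<theta> S \<Longrightarrow>
        vfun \<theta> i q < 1 / 2"
  shows "quasi_convex_on {qbar0 \<theta> (insert (Min ({1..n} - S)) S) .. qbar0 \<theta> S} (RS \<theta> S)"
proof -
  define q_min where "q_min = qbar0 \<theta> (insert (Min ({1..n} - S)) S)"
  have "finite S" using S_sub by (meson finite_atLeastAtMost finite_subset psubset_imp_subset)
  then have "0 < q_min" unfolding q_min_def using qbar0_spec by blast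
  show ?thesis unfolding q_min_def[symmetric]
  proof (rule quasi_convex_on_if_deriv_sign_change)
    fix t assume "q_min \<le> t"
    then show "(RS \<theta> S has_real_derivative RS_slope \<theta> S t / t) (at t)"
      using \<open>0 < q_min\<close> by (intro RS_has_real_derivative) simp
  next
    fix s t assume "q_min \<le> s" "s < t" "t \<le> qbar0 \<theta> S" "0 < RS_slope \<theta> S s / s"
    moreover have "RS_slope \<theta> S s \<le> RS_slope \<theta> S t"
      using calculation \<open>0 < q_min\<close> half
      by (intro RS_slope_mono) (auto simp: q_min_def)
    ultimately show "0 \<le> RS_slope \<theta> S t / t"
      using \<open>0 < q_min\<close> by (simp add: zero_less_divide_iff)
  qed
qed

end
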